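(* Let $X$ be a locally super-compact $L$-sober space. Then $\Omega_LX$ is a continuous $L$-dcpo.
   Context: $L$ is a frame with implication $\to$. $L$-subsets: maps to $L$; nonempty: $\bigvee A=1$; ${\rm sub}_X(A,B)=\bigwedge_xA(x)\to B(x)$. $L$-topology: $\mathcal O(X)\subseteq L^X$ closed under finite meets and arbitrary joins containing all constants $a_X$; interior $A^\circ$ is the join of open sets below $A$. Super-compact: nonempty $A$ with ${\rm sub}_X(A,\bigvee_iV_i)=\bigvee_i{\rm sub}_X(A,V_i)$ for every family of open $V_i$; ${\rm SC}(X)$ their set. Locally super-compact: every open $A=\bigvee_{B\in{\rm SC}(X)}{\rm sub}_X(B,A)\wedge B^\circ$. A point of $\mathcal O(X)$: $p:\mathcal O(X)\to L$ preserving binary meets, arbitrary joins, with $p(\lambda_X)=\lambda$; $[x](A)=A(x)$; $L$-sober: $x\mapsto[x]$ bijective onto the points (in particular $X$ is $T_0$). $\Omega_LX$ is $X$ with the specialization $L$-order $e(x,y)=\bigwedge_{A\in\mathcal O(X)}A(x)\to A(y)$. For an $L$-ordered set $(P,e)$ ($e(x,x)=1$, $e(x,y)\wedge e(y,z)\le e(x,z)$, $e(x,y)\wedge e(y,x)=1\Rightarrow x=y$): ${\downarrow}y(x)=e(x,y)$; $\sqcup A=x$ iff $e(x,y)={\rm sub}_P(A,{\downarrow}y)$ for all $y$; directed: nonempty and $D(x)\wedge D(y)\le\bigvee_zD(z)\wedge e(x,z)\wedge e(y,z)$; ideal: directed lower set; $L$-dcpo: all directed $L$-subsets have suprema; ${\Downarrow}x(y)=\bigwedge\{e(x,\sqcup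 I)\to I(y):I\text{ ideal with a supremum}\}$; continuous $L$-dcpo: an $L$-dcpo in which each ${\Downarrow}x$ is directed with supremum $x$. *)

theory Defs
  imports Main
begin

class frame = complete_lattice +
  assumes inf_Sup_distrib: "inf a (Sup S) = (SUP s\<in>S. inf a s)"

definition fimp :: "'l::frame \<Rightarrow> 'l \<Rightarrow> 'l" where
  "fimp a b = Sup {c. inf c a \<le> b}"

section \<open>L-subsets (the space X is the whole type 'a)\<close>

definition Lnonempty :: "('a \<Rightarrow> 'l::frame) \<Rightarrow> bool" where
  "Lnonempty A \<longleftrightarrow> (SUP x. A x) = top"

definition Lsub :: "('a \<Rightarrow> 'l::frame) \<Rightarrow> ('a \<Rightarrow> 'l) \<Rightarrow> 'l" where
  "Lsub A B = (INF x. fimp (A x) (B x))"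

definition L_topology :: "('a \<Rightarrow> 'l::frame) set \<Rightarrow> bool" where
  "L_topology T \<longleftrightarrow>
     (\<forall>U\<in>T. \<forall>V\<in>T. inf U V \<in> T) \<and>
     (\<forall>S. S \<subseteq> T \<longrightarrow> Sup S \<in> T) \<and>
     (\<forall>a. (\<lambda>_. a) \<in> T)"

definition Linterior :: "('a \<Rightarrow> 'l::frame) set \<Rightarrow> ('a \<Rightarrow> 'l) \<Rightarrow> ('a \<Rightarrow> 'l)" where
  "Linterior T A = Sup {U \<in> T. U \<le> A}"

definition super_compact :: "('a \<Rightarrow> 'l::frame) set \<Rightarrow> ('a \<Rightarrow> 'l) \<Rightarrow> bool" where
  "super_compact T A \<longleftrightarrow> Lnonempty A \<and>
     (\<forall>(I::('a \<Rightarrow> 'l) set) V. (\<forall>i\<in>I. V i \<in> T) \<longrightarrow>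
        Lsub A (SUP i\<in>I. V i) = (SUP i\<in>I. Lsub A (V i)))"

definition locally_super_compact :: "('a \<Rightarrow> 'l::frame) set \<Rightarrow> bool" where
  "locally_super_compact T \<longleftrightarrow>
     (\<forall>A\<in>T. A = (SUP B\<in>{B. super_compact T B}. (\<lambda>x. inf (Lsub B A) (Linterior T B x))))"

definition is_point :: "('a \<Rightarrow> 'l::frame) set \<Rightarrow> (('a \<Rightarrow> 'l) \<Rightarrow> 'l) \<Rightarrow> bool" where
  "is_point T p \<longleftrightarrow>
     (\<forall>U\<in>T. \<forall>V\<in>T. p (inf U V) = inf (p U) (p V)) \<and>
     (\<forall>S. S \<subseteq> T \<longrightarrow> p (Sup S) = (SUP U\<in>S. p U)) \<and>
     (\<forall>a. p (\<lambda>_. a) = a)"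

text \<open>L-sober: the map x |-> [x] (with [x](A) = A(x), a map on the open sets)
  is a bijection from X onto the points of O(X).\<close>
definition L_sober :: "('a \<Rightarrow> 'l::frame) set \<Rightarrow> bool" where
  "L_sober T \<longleftrightarrow>
     (\<forall>x y. (\<forall>U\<in>T. U x = U y) \<longrightarrow> x = y) \<and>
     (\<forall>p. is_point T p \<longrightarrow> (\<exists>x. \<forall>U\<in>T. p U = U x))"

definition specialization :: "('a \<Rightarrow> 'l::frame) set \<Rightarrow> 'a \<Rightarrow> 'a \<Rightarrow> 'l" where
  "specialization T x y = (INF A\<in>T. fimp (A x) (A y))"

section \<open>L-ordered sets (carrier = the whole type)\<close>

definition L_order :: "('a \<Rightarrow> 'a \<Rightarrow> 'l::frame) \<Rightarrow> bool" where
  "L_order e \<longleftrightarrow> (\<forall>x. e x x = top) \<and>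
     (\<forall>x y z. inf (e x y) (e y z) \<le> e x z) \<and>
     (\<forall>x y. inf (e x y) (e y x) = top \<longrightarrow> x = y)"

definition Ldown :: "('a \<Rightarrow> 'a \<Rightarrow> 'l::frame) \<Rightarrow> 'a \<Rightarrow> ('a \<Rightarrow> 'l)" where
  "Ldown e y = (\<lambda>x. e x y)"

definition is_Lsup :: "('a \<Rightarrow> 'a \<Rightarrow> 'l::frame) \<Rightarrow> ('a \<Rightarrow> 'l) \<Rightarrow> 'a \<Rightarrow> bool" where
  "is_Lsup e A x \<longleftrightarrow> (\<forall>y. e x y = Lsub A (Ldown e y))"

definition Ldirected :: "('a \<Rightarrow> 'a \<Rightarrow> 'l::frame) \<Rightarrow> ('a \<Rightarrow> 'l) \<Rightarrow> bool" where
  "Ldirected e D \<longleftrightarrow> Lnonempty D \<and>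
     (\<forall>x y. inf (D x) (D y) \<le> (SUP z. inf (D z) (inf (e x z) (e y z))))"

definition Llower :: "('a \<Rightarrow> 'a \<Rightarrow> 'l::frame) \<Rightarrow> ('a \<Rightarrow> 'l) \<Rightarrow> bool" where
  "Llower e A \<longleftrightarrow> (\<forall>x y. inf (A x) (e y x) \<le> A y)"

definition Lideal :: "('a \<Rightarrow> 'a \<Rightarrow> 'l::frame) \<Rightarrow> ('a \<Rightarrow> 'l) \<Rightarrow> bool" where
  "Lideal e I \<longleftrightarrow> Ldirected e I \<and> Llower e I"

definition L_dcpo :: "('a \<Rightarrow> 'a \<Rightarrow> 'l::frame) \<Rightarrow> bool" where
  "L_dcpo e \<longleftrightarrow> L_order e \<and> (\<forall>D. Ldirected e D \<longrightarrow> (\<exists>x. is_Lsup e D x))"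

definition Lwaybelow :: "('a \<Rightarrow> 'a \<Rightarrow> 'l::frame) \<Rightarrow> 'a \<Rightarrow> ('a \<Rightarrow> 'l)" where
  "Lwaybelow e x = (\<lambda>y. Inf {fimp (e x s) (I y) | I s. Lideal e I \<and> is_Lsup e I s})"

definition continuous_L_dcpo :: "('a \<Rightarrow> 'a \<Rightarrow> 'l::frame) \<Rightarrow> bool" where
  "continuous_L_dcpo e \<longleftrightarrow> L_dcpo e \<and>
     (\<forall>x. Ldirected e (Lwaybelow e x) \<and> is_Lsup e (Lwaybelow e x) x)"

end

theory Submission
  imports Defs
begin

(*
  Sobriety turns suitable maps on the open L-sets into points of X. For a directed L-subset D,
  the map U |-> \<Squnion>z. D(z) \<and> U(z) is a point [s], and s is the supremum of D in \<Omega>_L X;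
  for a super-compact B, the map sub(B,-) is a point [y], and B \<le> \<up>y.
  Local super-compactness thus yields, for every open A, the interpolation
  A(x) \<le> \<Squnion>y. A(y) \<and> (\<up>y)\<degree>(x). From it one reads off that y |-> (\<up>y)\<degree>(x) is an ideal
  with supremum x; conversely, (\<up>y)\<degree> being open, every ideal J with supremum s satisfies
  (\<up>y)\<degree>(x) \<and> e(x,s) \<le> J(y). Hence \<Down>x(y) = (\<up>y)\<degree>(x), an ideal with supremum x.
*)

lemma lower_bounds_eqI: "(\<And>c. c \<le> a \<longleftrightarrow> c \<le> b) \<Longrightarrow> a = (b::'a::order)"
  by (meson order.antisym order.refl)

lemma inf_SUP_frame: "inf (a::'l::frame) (SUP i\<in>I. f i) = (SUP i\<in>I. inf a (f i))"
  using inf_Sup_distrib[of a "f ` I"] by (simp add: image_image)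

lemma SUP_inf_frame: "inf (SUP i\<in>I. f i) (a::'l::frame) = (SUP i\<in>I. inf (f i) a)"
  by (simp add: inf_commute inf_SUP_frame)

lemma le_fimp_iff: "(c::'l::frame) \<le> fimp a b \<longleftrightarrow> inf c a \<le> b"
proof
  assume "c \<le> fimp a b"
  then have "inf c a \<le> inf (fimp a b) a"
    by (rule inf_mono) simp
  also have "\<dots> = inf a (fimp a b)"
    by (rule inf_commute)
  also have "\<dots> = (SUP s\<in>{c. inf c a \<le> b}. inf a s)"
    unfolding fimp_def by (rule inf_Sup_distrib)
  also have "\<dots> \<le> b"
    by (auto intro!: SUP_least simp: inf_commute)
  finally show "inf c a \<le> b" .
qed (auto simp: fimp_def intro: Sup_upper)

lemma fimp_top_left: "fimp top a = (a::'l::frame)"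
  by (rule lower_bounds_eqI) (simp add: le_fimp_iff)

lemma le_Lsub_iff: "c \<le> Lsub A B \<longleftrightarrow> (\<forall>x. inf c (A x) \<le> B x)"
  by (simp add: Lsub_def le_INF_iff le_fimp_iff)

lemma Lsub_const:
  assumes "Lnonempty A"
  shows "Lsub A (\<lambda>_. a) = a"
proof (rule lower_bounds_eqI)
  fix c
  have "c \<le> Lsub A (\<lambda>_. a) \<longleftrightarrow> inf c (SUP x. A x) \<le> a"
    by (simp add: le_Lsub_iff inf_SUP_frame SUP_le_iff)
  then show "c \<le> Lsub A (\<lambda>_. a) \<longleftrightarrow> c \<le> a"
    using assms by (simp add: Lnonempty_def)
qed

subsection \<open>The specialization L-order\<close>

lemma le_specialization_iff: "c \<le> specialization T x y \<longleftrightarrow> (\<forall>A\<in>T. inf c (A x) \<le> A y)"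
  by (simp add: specialization_def le_INF_iff le_fimp_iff)

lemma open_specialization_le: "A \<in> T \<Longrightarrow> inf (A x) (specialization T x y) \<le> A y"
  using le_specialization_iff[of "specialization T x y" T x y] by (simp add: inf_commute)

lemma specialization_refl: "specialization T x x = top"
  by (rule top_le) (simp add: le_specialization_iff)

lemma specialization_trans:
  "inf (specialization T x y) (specialization T y z) \<le> specialization T x z"
  unfolding le_specialization_iff
proof
  fix A assume A: "A \<in> T"
  have "inf (inf (specialization T x y) (specialization T y z)) (A x)
      = inf (inf (A x) (specialization T x y)) (specialization T y z)"
    by (simp add: ac_simps)
  also have "\<dots> \<le> inf (A y) (specialization T y z)"
    using open_specialization_le[OF A] inf_mono by blast
  also have "\<dots> \<le> A z"
    using open_specialization_le[OF A] .
  finally show "inf (inf (specialization T x y) (specialization T y z)) (A x) \<le> A z" .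
qed

lemma L_order_specialization:
  assumes T0: "\<forall>x y. (\<forall>U\<in>T. U x = U y) \<longrightarrow> x = y"
  shows "L_order (specialization T)"
  unfolding L_order_def
proof (intro conjI allI impI specialization_refl specialization_trans)
  fix x y
  assume "inf (specialization T x y) (specialization T y x) = top"
  then have "specialization T x y = top" "specialization T y x = top"
    by (simp_all add: inf_eq_top_iff)
  then have "\<forall>U\<in>T. U x = U y"
    using open_specialization_le[of _ T x y] open_specialization_le[of _ T y x]
    by (auto intro: order.antisym)
  then show "x = y"
    using T0 by blast
qed

lemma L_sober_L_order_specialization: "L_sober T \<Longrightarrow> L_order (specialization T)"
  unfolding L_sober_def by (intro L_order_specialization) (erule conjunct1)

lemma is_Lsup_unique:
  assumes "L_order e" and "is_Lsup e A s" and "is_Lsup e A t"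
  shows "s = t"
proof -
  have "e s t = e t t" "e t s = e s s"
    using assms(2,3) unfolding is_Lsup_def by simp_all
  then show "s = t"
    using assms(1) unfolding L_order_def by simp
qed

subsection \<open>Points of O(X) and suprema\<close>

lemma is_point_Lsub:
  fixes T :: "('a \<Rightarrow> 'l::frame) set"
  assumes "super_compact T B"
  shows "is_point T (Lsub B)"
  unfolding is_point_def
proof (intro conjI allI ballI impI)
  fix U V :: "'a \<Rightarrow> 'l"
  show "Lsub B (inf U V) = inf (Lsub B U) (Lsub B V)"
    by (rule lower_bounds_eqI) (auto simp: le_Lsub_iff)
next
  fix S :: "('a \<Rightarrow> 'l) set"
  assume "S \<subseteq> T"
  then show "Lsub B (Sup S) = (SUP U\<in>S. Lsub B U)"
    using assms unfolding super_compact_def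
    by (auto dest!: spec[of _ S] spec[of _ id])
next
  fix a :: 'l
  show "Lsub B (\<lambda>_. a) = a"
    using assms by (simp add: super_compact_def Lsub_const)
qed

lemma is_point_Ldirected:
  fixes T :: "('a \<Rightarrow> 'l::frame) set"
  assumes D: "Ldirected (specialization T) D"
  shows "is_point T (\<lambda>U. SUP z. inf (D z) (U z))"
  unfolding is_point_def
proof (intro conjI allI ballI impI)
  fix U V :: "'a \<Rightarrow> 'l"
  assume U: "U \<in> T" and V: "V \<in> T"
  let ?e = "specialization T"
  have "inf (inf (D x) (U x)) (inf (D y) (V y)) \<le> (SUP z. inf (D z) (inf (U z) (V z)))" for x y
  proof -
    have "inf (inf (D x) (U x)) (inf (D y) (V y)) = inf (inf (D x) (D y)) (inf (U x) (V y))"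
      by (simp add: ac_simps)
    also have "\<dots> \<le> inf (SUP z. inf (D z) (inf (?e x z) (?e y z))) (inf (U x) (V y))"
      using D unfolding Ldirected_def by (meson inf_mono order_refl)
    also have "\<dots> = (SUP z. inf (inf (D z) (inf (?e x z) (?e y z))) (inf (U x) (V y)))"
      by (rule SUP_inf_frame)
    also have "\<dots> \<le> (SUP z. inf (D z) (inf (U z) (V z)))"
    proof (rule SUP_mono')
      fix z
      have "inf (inf (D z) (inf (?e x z) (?e y z))) (inf (U x) (V y))
          = inf (D z) (inf (inf (U x) (?e x z)) (inf (V y) (?e y z)))"
        by (simp add: ac_simps)
      also have "\<dots> \<le> inf (D z) (inf (U z) (V z))"
        using open_specialization_le[OF U] open_specialization_le[OF V] by (meson inf_mono order_refl)
      finally show "inf (inf (D z) (inf (?e x z) (?e y z))) (inf (U x) (V y))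
          \<le> inf (D z) (inf (U z) (V z))" .
    qed
    finally show ?thesis .
  qed
  then have "inf (SUP z. inf (D z) (U z)) (SUP z. inf (D z) (V z)) \<le> (SUP z. inf (D z) (inf U V z))"
    by (simp add: SUP_inf_frame inf_SUP_frame SUP_le_iff)
  moreover have "(SUP z. inf (D z) (inf U V z)) \<le> inf (SUP z. inf (D z) (U z)) (SUP z. inf (D z) (V z))"
    unfolding inf_apply by (rule le_infI; rule SUP_mono'; rule inf_mono; simp)
  ultimately show "(SUP z. inf (D z) (inf U V z)) = inf (SUP z. inf (D z) (U z)) (SUP z. inf (D z) (V z))"
    by (rule order.antisym[rotated])
next
  fix S :: "('a \<Rightarrow> 'l) set"
  show "(SUP z. inf (D z) (Sup S z)) = (SUP U\<in>S. SUP z. inf (D z) (U z))"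
    unfolding Sup_apply inf_SUP_frame image_image by (rule SUP_commute)
next
  fix a :: 'l
  show "(SUP z. inf (D z) ((\<lambda>_. a) z)) = a"
    using D SUP_inf_frame[of D UNIV a] by (simp add: Ldirected_def Lnonempty_def)
qed

lemma is_Lsup_specializationI:
  assumes s: "\<forall>U\<in>T. U s = (SUP z. inf (D z) (U z))"
  shows "is_Lsup (specialization T) D s"
  unfolding is_Lsup_def
proof
  fix w
  show "specialization T s w = Lsub D (Ldown (specialization T) w)"
  proof (rule lower_bounds_eqI)
    fix c
    have "c \<le> specialization T s w \<longleftrightarrow> (\<forall>A\<in>T. inf c (A s) \<le> A w)"
      by (rule le_specialization_iff)
    also have "\<dots> \<longleftrightarrow> (\<forall>A\<in>T. \<forall>z. inf c (inf (D z) (A z)) \<le> A w)"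
    proof (rule ball_cong[OF refl])
      fix A assume "A \<in> T"
      with s have "A s = (SUP z. inf (D z) (A z))"
        by (rule bspec)
      then show "inf c (A s) \<le> A w \<longleftrightarrow> (\<forall>z. inf c (inf (D z) (A z)) \<le> A w)"
        by (simp add: inf_SUP_frame SUP_le_iff)
    qed
    also have "\<dots> \<longleftrightarrow> c \<le> Lsub D (Ldown (specialization T) w)"
      by (auto simp: le_Lsub_iff Ldown_def le_specialization_iff inf_assoc)
    finally show "c \<le> specialization T s w \<longleftrightarrow> c \<le> Lsub D (Ldown (specialization T) w)" .
  qed
qed

lemma L_sober_Ldirected_Lsup:
  assumes "L_sober T" and "Ldirected (specialization T) D"
  obtains s where "is_Lsup (specialization T) D s" and "\<forall>U\<in>T. U s = (SUP z. inf (D z) (U z))"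
proof -
  have "is_point T (\<lambda>U. SUP z. inf (D z) (U z))"
    using assms(2) by (rule is_point_Ldirected)
  then obtain s where s: "\<forall>U\<in>T. (SUP z. inf (D z) (U z)) = U s"
    using assms(1) unfolding L_sober_def by blast
  have open_eq: "\<forall>U\<in>T. U s = (SUP z. inf (D z) (U z))"
  proof
    fix U assume "U \<in> T"
    with s show "U s = (SUP z. inf (D z) (U z))"
      by (auto dest: sym)
  qed
  show thesis
    using is_Lsup_specializationI[OF open_eq] open_eq by (rule that)
qed

definition Lup :: "('a \<Rightarrow> 'a \<Rightarrow> 'l::frame) \<Rightarrow> 'a \<Rightarrow> ('a \<Rightarrow> 'l)" where
  "Lup e y = (\<lambda>x. e y x)"

lemma le_Lup_specializationI:
  assumes "\<forall>U\<in>T. Lsub B U = U y"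
  shows "B \<le> Lup (specialization T) y"
proof (rule le_funI)
  fix z
  show "B z \<le> Lup (specialization T) y z"
    unfolding Lup_def le_specialization_iff
  proof
    fix A assume "A \<in> T"
    with assms have "A y = Lsub B A"
      by simp
    then have "inf (B z) (A y) = inf (Lsub B A) (B z)"
      by (simp add: inf_commute)
    also have "\<dots> \<le> A z"
      using le_Lsub_iff[of "Lsub B A" B A] by blast
    finally show "inf (B z) (A y) \<le> A z" .
  qed
qed

lemma L_sober_super_compact_point:
  assumes "L_sober T" and "super_compact T B"
  obtains y where "\<forall>U\<in>T. Lsub B U = U y" and "B \<le> Lup (specialization T) y"
proof -
  have "is_point T (Lsub B)"
    using assms(2) by (rule is_point_Lsub)
  then obtain y where y: "\<forall>U\<in>T. Lsub B U = U y"
    using assms(1) unfolding L_sober_def by blast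
  show thesis
    using y le_Lup_specializationI[OF y] by (rule that)
qed

lemma L_topology_const: "L_topology T \<Longrightarrow> (\<lambda>_. a) \<in> T"
  unfolding L_topology_def by blast

lemma L_topology_inf: "L_topology T \<Longrightarrow> U \<in> T \<Longrightarrow> V \<in> T \<Longrightarrow> inf U V \<in> T"
  unfolding L_topology_def by blast

lemma Linterior_open: "L_topology T \<Longrightarrow> Linterior T A \<in> T"
  unfolding L_topology_def Linterior_def by auto

lemma Linterior_le: "Linterior T A \<le> A"
  unfolding Linterior_def by (rule Sup_least) auto

lemma Linterior_maximal: "U \<in> T \<Longrightarrow> U \<le> A \<Longrightarrow> U \<le> Linterior T A"
  unfolding Linterior_def by (rule Sup_upper) auto

lemma Linterior_mono: "A \<le> B \<Longrightarrow> Linterior T A \<le> Linterior T B"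
  unfolding Linterior_def by (rule Sup_subset_mono) auto

lemma locally_super_compactD:
  assumes "locally_super_compact T" and "A \<in> T"
  shows "A x = (SUP B\<in>{B. super_compact T B}. inf (Lsub B A) (Linterior T B x))"
proof -
  have "A = (SUP B\<in>{B. super_compact T B}. (\<lambda>x. inf (Lsub B A) (Linterior T B x)))"
    using assms unfolding locally_super_compact_def by blast
  then have "A x = (SUP B\<in>{B. super_compact T B}. (\<lambda>x. inf (Lsub B A) (Linterior T B x))) x"
    by (rule fun_cong)
  then show ?thesis
    by (simp only: SUP_apply)
qed

subsection \<open>The way-below L-relation\<close>

definition interior_up :: "('a \<Rightarrow> 'l::frame) set \<Rightarrow> 'a \<Rightarrow> 'a \<Rightarrow> 'l" where
  "interior_up T x y = Linterior T (Lup (specialization T) y) x"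

lemma interior_up_le: "interior_up T x y \<le> specialization T y x"
  using Linterior_le[of T "Lup (specialization T) y"] by (simp add: interior_up_def Lup_def le_fun_def)

lemma open_le_SUP_interior_up:
  assumes lsc: "locally_super_compact T" and sob: "L_sober T" and A: "A \<in> T"
  shows "A x \<le> (SUP y. inf (A y) (interior_up T x y))"
proof -
  have "inf (Lsub B A) (Linterior T B x) \<le> (SUP y. inf (A y) (interior_up T x y))"
    if B: "super_compact T B" for B
  proof -
    obtain y where y: "\<forall>U\<in>T. Lsub B U = U y" and B_le: "B \<le> Lup (specialization T) y"
      using L_sober_super_compact_point[OF sob B] .
    have "Lsub B A = A y"
      using y A by blast
    moreover have "Linterior T B x \<le> interior_up T x y"
      using Linterior_mono[OF B_le, of T] by (simp add: interior_up_def le_fun_def)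
    ultimately have "inf (Lsub B A) (Linterior T B x) \<le> inf (A y) (interior_up T x y)"
      by (simp add: inf.coboundedI2)
    then show ?thesis
      by (rule SUP_upper2[OF UNIV_I])
  qed
  then show ?thesis
    by (subst locally_super_compactD[OF lsc A]) (auto intro: SUP_least)
qed

lemma interior_up_open: "L_topology T \<Longrightarrow> (\<lambda>x. interior_up T x y) \<in> T"
  unfolding interior_up_def by (simp add: Linterior_open)

lemma le_interior_upI:
  assumes "U \<in> T" and "\<And>z. U z \<le> specialization T y z"
  shows "U x \<le> interior_up T x y"
proof -
  have "U \<le> Linterior T (Lup (specialization T) y)"
    using assms by (intro Linterior_maximal) (auto simp: Lup_def le_fun_def)
  then show ?thesis
    by (simp add: interior_up_def le_fun_def)
qed

lemma Llower_interior_up: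
  assumes "L_topology T"
  shows "Llower (specialization T) (interior_up T x)"
  unfolding Llower_def
proof (intro allI)
  fix a b
  let ?U = "inf (\<lambda>_. specialization T b a) (\<lambda>z. interior_up T z a)"
  have "?U \<in> T"
    using assms by (simp add: L_topology_inf L_topology_const interior_up_open)
  moreover have "?U z \<le> specialization T b z" for z
  proof -
    have "?U z \<le> inf (specialization T b a) (specialization T a z)"
      using interior_up_le[of T z a] by (simp add: inf.coboundedI2)
    also have "\<dots> \<le> specialization T b z"
      by (rule specialization_trans)
    finally show ?thesis .
  qed
  ultimately have "?U x \<le> interior_up T x b"
    by (rule le_interior_upI)
  then show "inf (interior_up T x a) (specialization T b a) \<le> interior_up T x b"
    by (simp add: inf_commute)
qed

context
  fixes T :: "('a \<Rightarrow> 'l::frame) set"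
  assumes top: "L_topology T" and lsc: "locally_super_compact T" and sob: "L_sober T"
begin

lemma Ldirected_interior_up: "Ldirected (specialization T) (interior_up T x)"
  unfolding Ldirected_def Lnonempty_def
proof (intro conjI allI)
  have "(\<lambda>_. top) x \<le> (SUP y. inf top (interior_up T x y))"
    by (rule open_le_SUP_interior_up[OF lsc sob L_topology_const[OF top]])
  then show "(SUP y. interior_up T x y) = top"
    by (simp add: top_le)
next
  fix a b
  let ?U = "inf (\<lambda>z. interior_up T z a) (\<lambda>z. interior_up T z b)"
  have "?U \<in> T"
    using top by (simp add: L_topology_inf interior_up_open)
  then have "?U x \<le> (SUP y. inf (?U y) (interior_up T x y))"
    by (rule open_le_SUP_interior_up[OF lsc sob])
  also have "\<dots> \<le> (SUP y. inf (interior_up T x y) (inf (specialization T a y) (specialization T b y)))"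
  proof (rule SUP_mono')
    fix y
    have "inf (?U y) (interior_up T x y) = inf (interior_up T x y) (?U y)"
      by (rule inf_commute)
    also have "\<dots> \<le> inf (interior_up T x y) (inf (specialization T a y) (specialization T b y))"
      unfolding inf_apply by (intro inf_mono order_refl interior_up_le)
    finally show "inf (?U y) (interior_up T x y)
        \<le> inf (interior_up T x y) (inf (specialization T a y) (specialization T b y))" .
  qed
  finally show "inf (interior_up T x a) (interior_up T x b)
      \<le> (SUP y. inf (interior_up T x y) (inf (specialization T a y) (specialization T b y)))"
    by simp
qed

lemma is_Lsup_interior_up: "is_Lsup (specialization T) (interior_up T x) x"
  unfolding is_Lsup_def
proof
  fix w
  let ?c = "Lsub (interior_up T x) (Ldown (specialization T) w)"
  have "specialization T x w \<le> ?c"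
    unfolding le_Lsub_iff Ldown_def
  proof
    fix y
    have "inf (specialization T x w) (interior_up T x y) = inf (interior_up T x y) (specialization T x w)"
      by (rule inf_commute)
    also have "\<dots> \<le> inf (specialization T y x) (specialization T x w)"
      by (intro inf_mono interior_up_le order_refl)
    also have "\<dots> \<le> specialization T y w"
      by (rule specialization_trans)
    finally show "inf (specialization T x w) (interior_up T x y) \<le> specialization T y w" .
  qed
  moreover have "?c \<le> specialization T x w"
    unfolding le_specialization_iff
  proof
    fix A assume A: "A \<in> T"
    have "inf ?c (A x) \<le> inf ?c (SUP y. inf (A y) (interior_up T x y))"
      using open_le_SUP_interior_up[OF lsc sob A] by (rule inf_mono[OF order_refl])
    also have "\<dots> = (SUP y. inf (A y) (inf ?c (interior_up T x y)))"
      by (simp add: inf_SUP_frame inf_left_commute)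
    also have "\<dots> \<le> (SUP y. inf (A y) (specialization T y w))"
      using order_refl[of ?c] unfolding le_Lsub_iff Ldown_def
      by (intro SUP_mono' inf_mono order_refl) blast
    also have "\<dots> \<le> A w"
      using open_specialization_le[OF A] by (rule SUP_least)
    finally show "inf ?c (A x) \<le> A w" .
  qed
  ultimately show "specialization T x w = ?c"
    by (rule order.antisym)
qed

end

lemma interior_up_le_fimp:
  assumes top: "L_topology T" and sob: "L_sober T"
    and J: "Lideal (specialization T) J" and s: "is_Lsup (specialization T) J s"
  shows "interior_up T x y \<le> fimp (specialization T x s) (J y)"
  unfolding le_fimp_iff
proof -
  have V: "(\<lambda>z. interior_up T z y) \<in> T"
    using top by (rule interior_up_open)
  have "Ldirected (specialization T) J" and lower: "Llower (specialization T) J"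
    using J by (simp_all add: Lideal_def)
  then obtain s' where s': "is_Lsup (specialization T) J s'"
    and V_s': "\<forall>U\<in>T. U s' = (SUP z. inf (J z) (U z))"
    using L_sober_Ldirected_Lsup[OF sob] by blast
  have "s' = s"
    using L_sober_L_order_specialization[OF sob] s' s by (rule is_Lsup_unique)
  have "inf (interior_up T x y) (specialization T x s) \<le> interior_up T s y"
    using open_specialization_le[OF V] .
  also have "\<dots> = (SUP z. inf (J z) (interior_up T z y))"
    using bspec[OF V_s' V] \<open>s' = s\<close> by simp
  also have "\<dots> \<le> (SUP z. inf (J z) (specialization T y z))"
    by (intro SUP_mono' inf_mono order_refl interior_up_le)
  also have "\<dots> \<le> J y"
  proof (rule SUP_least)
    fix z
    show "inf (J z) (specialization T y z) \<le> J y"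
      using lower unfolding Llower_def by blast
  qed
  finally show "inf (interior_up T x y) (specialization T x s) \<le> J y" .
qed

lemma Lwaybelow_eq_interior_up:
  assumes "L_topology T" and "locally_super_compact T" and "L_sober T"
  shows "Lwaybelow (specialization T) x = interior_up T x"
proof (rule ext, rule order.antisym)
  fix y
  have "Lideal (specialization T) (interior_up T x)"
    unfolding Lideal_def using Ldirected_interior_up[OF assms] Llower_interior_up[OF assms(1)] ..
  then have "fimp (specialization T x x) (interior_up T x y)
      \<in> {fimp (specialization T x s) (I y) | I s. Lideal (specialization T) I \<and> is_Lsup (specialization T) I s}"
    using is_Lsup_interior_up[OF assms] by blast
  then have "Lwaybelow (specialization T) x y \<le> fimp (specialization T x x) (interior_up T x y)"
    unfolding Lwaybelow_def by (rule Inf_lower)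
  then show "Lwaybelow (specialization T) x y \<le> interior_up T x y"
    by (simp add: specialization_refl fimp_top_left)
  show "interior_up T x y \<le> Lwaybelow (specialization T) x y"
    unfolding Lwaybelow_def by (rule Inf_greatest) (auto intro: interior_up_le_fimp[OF assms(1,3)])
qed

theorem proposition4p6:
  fixes T :: "('a \<Rightarrow> 'l::frame) set"
  assumes "L_topology T"
    and "locally_super_compact T"
    and "L_sober T"
  shows "continuous_L_dcpo (specialization T)"
  unfolding continuous_L_dcpo_def L_dcpo_def Lwaybelow_eq_interior_up[OF assms]
proof (intro conjI allI impI)
  show "L_order (specialization T)"
    using assms(3) by (rule L_sober_L_order_specialization)
  show "\<exists>s. is_Lsup (specialization T) D s" if "Ldirected (specialization T) D" for D
    by (rule L_sober_Ldirected_Lsup[OF assms(3) that]) blast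
  show "Ldirected (specialization T) (interior_up T x)" for x
    by (rule Ldirected_interior_up[OF assms])
  show "is_Lsup (specialization T) (interior_up T x) x" for x
    by (rule is_Lsup_interior_up[OF assms])
qed

end
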